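(* Let $X$ be a nonempty finite set. For all $\kappa,\lambda,\mu,\nu\in\mathcal{D}(X)$ and every $\omega\in\Omega(\lambda,\mu)$, there exist $\pi\in\Omega(\kappa,\mu)$ and $\rho\in\Omega(\lambda,\nu)$ such that $d_{TV}(\omega,\pi)\le d_{TV}(\kappa,\lambda)$ and $d_{TV}(\omega,\rho)\le d_{TV}(\mu,\nu)$.
   Context: $\mathcal{D}(Y)$ is the set of probability distributions on a finite set $Y$. $\Omega(\mu,\nu)=\{\omega\in\mathcal{D}(X\times X)\mid\forall x:\sum_y\omega(x,y)=\mu(x),\ \sum_y\omega(y,x)=\nu(x)\}$. For distributions $\alpha,\beta$ on a finite set $Y$ (here $Y=X$ or $Y=X\times X$), $d_{TV}(\alpha,\beta)=\max_{y\in Y}|\alpha(y)-\beta(y)|$ (a maximum pointwise difference, not the usual total variation). *)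

theory Defs
  imports Complex_Main
begin

text \<open>Probability distributions on a finite set, represented on a finite type 'a
  (nonempty automatically) as real-valued functions that are nonnegative and sum to 1.\<close>
definition distr :: "('a::finite \<Rightarrow> real) \<Rightarrow> bool" where
  "distr p \<longleftrightarrow> (\<forall>y. 0 \<le> p y) \<and> (\<Sum>y\<in>UNIV. p y) = 1"

definition couplings :: "('a::finite \<Rightarrow> real) \<Rightarrow> ('a \<Rightarrow> real) \<Rightarrow> ('a \<times> 'a \<Rightarrow> real) set" where
  "couplings mu nu = {\<omega>. distr \<omega> \<and>
      (\<forall>x. (\<Sum>y\<in>UNIV. \<omega> (x, y)) = mu x) \<and>
      (\<forall>x. (\<Sum>y\<in>UNIV. \<omega> (y, x)) = nu x)}"

text \<open>d_TV as the maximum pointwise difference (as in the paper).\<close>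
definition dTV :: "('a::finite \<Rightarrow> real) \<Rightarrow> ('a \<Rightarrow> real) \<Rightarrow> real" where
  "dTV \<alpha> \<beta> = Max (range (\<lambda>y. \<bar>\<alpha> y - \<beta> y\<bar>))"

end

theory Submission
  imports Defs
begin

text \<open>To move the first marginal from \<open>\<lambda>\<close> to \<open>\<kappa>\<close>,
  remove from each row \<open>x\<close> the excess mass \<open>(\<lambda> x - \<kappa> x)\<^sup>+\<close>, scaling the row down proportionally,
  and redistribute the removed column masses over the rows with deficit \<open>(\<kappa> x - \<lambda> x)\<^sup>+\<close>
  by a product measure. Column sums are unchanged, and entry \<open>(x, y)\<close> moves by at most the
  mass removed from or added to row \<open>x\<close>, which is at most \<open>\<bar>\<kappa> x - \<lambda> x\<bar>\<close>. Changing the second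
  marginal is the same construction applied to the transposed coupling.\<close>

lemma sum_UNIV_prod:
  fixes f :: "'a::finite \<times> 'b::finite \<Rightarrow> 'c::comm_monoid_add"
  shows "(\<Sum>z\<in>UNIV. f z) = (\<Sum>x\<in>UNIV. \<Sum>y\<in>UNIV. f (x, y))"
  by (simp add: sum.cartesian_product UNIV_Times_UNIV[symmetric] del: UNIV_Times_UNIV)

lemma couplingsI:
  assumes "distr ka" and "\<And>z. 0 \<le> p z"
    and "\<And>x. (\<Sum>y\<in>UNIV. p (x, y)) = ka x" and "\<And>y. (\<Sum>x\<in>UNIV. p (x, y)) = mu y"
  shows "p \<in> couplings ka mu"
  using assms by (simp add: couplings_def distr_def sum_UNIV_prod)

lemma couplings_swap:
  assumes "om \<in> couplings la mu"
  shows "om \<circ> prod.swap \<in> couplings mu la"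
proof -
  have "(\<Sum>z\<in>UNIV. om (prod.swap z)) = (\<Sum>z\<in>UNIV. om z)"
    using sum.reindex[of prod.swap UNIV om] by simp
  then show ?thesis
    using assms by (simp add: couplings_def distr_def)
qed

lemma abs_diff_le_dTV: "\<bar>\<alpha> y - \<beta> y\<bar> \<le> dTV \<alpha> \<beta>"
  unfolding dTV_def by (rule Max_ge) auto

lemma dTV_le:
  assumes "\<And>y. \<bar>\<alpha> y - \<beta> y\<bar> \<le> c"
  shows "dTV \<alpha> \<beta> \<le> c"
  unfolding dTV_def using assms by (subst Max_le_iff) auto

lemma nonneg_minorant_with_row_sums:
  fixes w :: "'a \<times> 'b::finite \<Rightarrow> real"
  assumes w: "\<And>z. 0 \<le> w z" and s: "\<And>x. 0 \<le> s x" "\<And>x. s x \<le> (\<Sum>y\<in>UNIV. w (x, y))"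
  shows "\<exists>v. (\<forall>z. 0 \<le> v z \<and> v z \<le> w z) \<and> (\<forall>x. (\<Sum>y\<in>UNIV. v (x, y)) = s x)"
proof -
  define l where "l x = (\<Sum>y\<in>UNIV. w (x, y))" for x
  define t where "t x = s x / l x" for x
  define v where "v z = w z * t (fst z)" for z
  have t: "0 \<le> t x" "t x \<le> 1" for x
    using s[of x] by (auto simp: t_def l_def divide_le_eq_1)
  have "0 \<le> v z \<and> v z \<le> w z" for z
    using w[of z] t[of "fst z"] mult_left_le[of "t (fst z)" "w z"] by (simp add: v_def)
  moreover have "(\<Sum>y\<in>UNIV. v (x, y)) = s x" for x
  proof (cases "l x = 0")
    case True
    then show ?thesis using s[of x] by (simp add: v_def t_def l_def)
  next
    case False
    have "(\<Sum>y\<in>UNIV. v (x, y)) = l x * t x"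
      by (simp add: v_def l_def sum_distrib_right)
    then show ?thesis using False by (simp add: t_def)
  qed
  ultimately show ?thesis by blast
qed

lemma product_matrix_with_margins:
  fixes m :: "'a::finite \<Rightarrow> real" and n :: "'b::finite \<Rightarrow> real"
  assumes m: "\<And>x. 0 \<le> m x" and n: "\<And>y. 0 \<le> n y"
    and mass: "(\<Sum>x\<in>UNIV. m x) = (\<Sum>y\<in>UNIV. n y)"
  shows "\<exists>v. (\<forall>z. 0 \<le> v z) \<and> (\<forall>x. (\<Sum>y\<in>UNIV. v (x, y)) = m x)
                            \<and> (\<forall>y. (\<Sum>x\<in>UNIV. v (x, y)) = n y)"
proof (cases "(\<Sum>x\<in>UNIV. m x) = 0")
  case True
  then have "m x = 0" "n y = 0" for x y
    using m n mass by (simp_all add: sum_nonneg_eq_0_iff)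
  then show ?thesis by (intro exI[of _ "\<lambda>_. 0"]) simp
next
  case False
  define v where "v z = m (fst z) * n (snd z) / (\<Sum>x\<in>UNIV. m x)" for z
  have "0 \<le> v z" for z using m n sum_nonneg[of UNIV m] by (simp add: v_def)
  moreover have "(\<Sum>y\<in>UNIV. v (x, y)) = m x" for x
    using False mass by (simp add: v_def flip: sum_distrib_left sum_divide_distrib)
  moreover have "(\<Sum>x\<in>UNIV. v (x, y)) = n y" for y
    using False by (simp add: v_def flip: sum_distrib_right sum_divide_distrib)
  ultimately show ?thesis by blast
qed

lemma couplings_change_first_marginal:
  fixes ka la mu :: "'a::finite \<Rightarrow> real" and om :: "'a \<times> 'a \<Rightarrow> real"
  assumes ka: "distr ka" and la: "distr la" and om: "om \<in> couplings la mu"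
  shows "\<exists>p \<in> couplings ka mu. \<forall>x y. \<bar>om (x, y) - p (x, y)\<bar> \<le> \<bar>ka x - la x\<bar>"
proof -
  have om_nonneg: "\<And>z. 0 \<le> om z" and rows: "\<And>x. (\<Sum>y\<in>UNIV. om (x, y)) = la x"
    and cols: "\<And>y. (\<Sum>x\<in>UNIV. om (x, y)) = mu y"
    using om by (auto simp: couplings_def distr_def)
  define excess where "excess x = max (la x - ka x) 0" for x
  define deficit where "deficit x = max (ka x - la x) 0" for x
  have "excess x \<le> la x" for x
    using ka la by (simp add: excess_def distr_def)
  then obtain r where r: "\<And>z. 0 \<le> r z \<and> r z \<le> om z"
    and r_rows: "\<And>x. (\<Sum>y\<in>UNIV. r (x, y)) = excess x"
    using nonneg_minorant_with_row_sums[of om excess] om_nonneg rows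
    by (auto simp: excess_def)
  define removed where "removed y = (\<Sum>x\<in>UNIV. r (x, y))" for y
  have "excess x - deficit x = la x - ka x" for x
    by (simp add: excess_def deficit_def)
  then have "(\<Sum>x\<in>UNIV. excess x) - (\<Sum>x\<in>UNIV. deficit x) = (\<Sum>x\<in>UNIV. la x) - (\<Sum>x\<in>UNIV. ka x)"
    by (simp flip: sum_subtractf)
  also have "\<dots> = 0"
    using ka la by (simp add: distr_def)
  finally have "(\<Sum>x\<in>UNIV. deficit x) = (\<Sum>y\<in>UNIV. removed y)"
    by (simp add: removed_def r_rows flip: sum.swap[of _ UNIV])
  moreover have "0 \<le> deficit x" for x
    by (simp add: deficit_def)
  moreover have "0 \<le> removed y" for y
    using r by (simp add: removed_def sum_nonneg)
  ultimately obtain a where a: "\<And>z. 0 \<le> a z"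
    and a_rows: "\<And>x. (\<Sum>y\<in>UNIV. a (x, y)) = deficit x"
    and a_cols: "\<And>y. (\<Sum>x\<in>UNIV. a (x, y)) = removed y"
    using product_matrix_with_margins[of deficit removed] by blast
  define p where "p z = om z - r z + a z" for z
  have "p \<in> couplings ka mu"
  proof (rule couplingsI[OF ka])
    show "0 \<le> p z" for z using r[of z] a[of z] by (simp add: p_def)
    show "(\<Sum>y\<in>UNIV. p (x, y)) = ka x" for x
      using rows[of x] r_rows[of x] a_rows[of x]
      by (simp add: p_def sum.distrib sum_subtractf excess_def deficit_def)
    show "(\<Sum>x\<in>UNIV. p (x, y)) = mu y" for y
      using cols[of y] a_cols[of y] by (simp add: p_def sum.distrib sum_subtractf removed_def)
  qed
  moreover have "\<bar>om (x, y) - p (x, y)\<bar> \<le> \<bar>ka x - la x\<bar>" for x y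
  proof -
    have "r (x, y) \<le> excess x"
      using member_le_sum[of y UNIV "\<lambda>y. r (x, y)"] r r_rows by auto
    moreover have "a (x, y) \<le> deficit x"
      using member_le_sum[of y UNIV "\<lambda>y. a (x, y)"] a a_rows by auto
    ultimately show ?thesis
      using r[of "(x, y)"] a[of "(x, y)"] by (auto simp: p_def excess_def deficit_def)
  qed
  ultimately show ?thesis by blast
qed

theorem lemma2:
  fixes ka la mu nu :: "'a::finite \<Rightarrow> real" and om :: "'a \<times> 'a \<Rightarrow> real"
  assumes "distr ka" "distr la" "distr mu" "distr nu"
    and "om \<in> couplings la mu"
  shows "\<exists>p \<in> couplings ka mu. \<exists>rho \<in> couplings la nu.
           dTV om p \<le> dTV ka la \<and> dTV om rho \<le> dTV mu nu"
proof -
  obtain p where p: "p \<in> couplings ka mu"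
    and p_close: "\<forall>x y. \<bar>om (x, y) - p (x, y)\<bar> \<le> \<bar>ka x - la x\<bar>"
    using couplings_change_first_marginal[OF assms(1,2,5)] by blast
  obtain q where q: "q \<in> couplings nu la"
    and q_close: "\<forall>x y. \<bar>om (y, x) - q (x, y)\<bar> \<le> \<bar>nu x - mu x\<bar>"
    using couplings_change_first_marginal[OF assms(4,3) couplings_swap[OF assms(5)]] by auto
  define rho where "rho = q \<circ> prod.swap"
  have "rho \<in> couplings la nu"
    using couplings_swap[OF q] by (simp add: rho_def comp_assoc)
  moreover have "dTV om p \<le> dTV ka la"
  proof (rule dTV_le)
    fix z :: "'a \<times> 'a"
    show "\<bar>om z - p z\<bar> \<le> dTV ka la"
      using p_close abs_diff_le_dTV[of ka "fst z" la] by (metis order_trans prod.collapse)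
  qed
  moreover have "dTV om rho \<le> dTV mu nu"
  proof (rule dTV_le)
    fix z :: "'a \<times> 'a"
    obtain x y where z: "z = (x, y)" by fastforce
    show "\<bar>om z - rho z\<bar> \<le> dTV mu nu"
      using q_close[rule_format, of x y] abs_diff_le_dTV[of mu y nu]
      by (simp add: z rho_def abs_minus_commute)
  qed
  ultimately show ?thesis using p by blast
qed

end
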